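(* Let $G=(V,E,w)$ be a weighted undirected $n$-vertex graph with distinct positive edge weights that contains a Hamiltonian path (no triangle inequality or completeness is assumed), and let $r:V\to\mathbb{R}^+$ be a range assignment. Let $F=(V,E_F)$ be the minimum spanning forest of $S=SDG(G,r)$ and let $H$ be a minimum-weight Hamiltonian path of $G$. Then there is an edge set $\tilde E\subseteq E_F$ with $w(\tilde E)\le w(H)$ such that $F\setminus\tilde E$ contains at least $\frac15\cdot n$ isolated vertices.
   Context: For a weighted graph $G=(V,E,w)$ and $r:V\to\mathbb{R}^+$, the symmetric disk graph $SDG(G,r)$ is the spanning subgraph of $G$ containing an edge $e=(u,v)\in E$ if and only if $r(u)\ge w(e)$ and $r(v)\ge w(e)$. The minimum spanning forest of a weighted graph is a spanning forest with the same connected components and minimum total weight (unique for distinct weights). The weight of an edge set is the sum of its edge weights. *)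

theory Defs
  imports Complex_Main
begin

definition wgraph :: "'a set \<Rightarrow> 'a set set \<Rightarrow> bool" where
  "wgraph V E \<longleftrightarrow> finite V \<and> E \<subseteq> {{u, v} | u v. u \<in> V \<and> v \<in> V \<and> u \<noteq> v}"

definition wt :: "('a set \<Rightarrow> real) \<Rightarrow> 'a set set \<Rightarrow> real" where
  "wt w A = (\<Sum>e\<in>A. w e)"

definition SDG :: "'a set set \<Rightarrow> ('a set \<Rightarrow> real) \<Rightarrow> ('a \<Rightarrow> real) \<Rightarrow> 'a set set" where
  "SDG E w r = {e \<in> E. \<forall>u v. e = {u, v} \<longrightarrow> r u \<ge> w e \<and> r v \<ge> w e}"

definition adj :: "'a set set \<Rightarrow> 'a \<Rightarrow> 'a \<Rightarrow> bool" where
  "adj A u v \<longleftrightarrow> {u, v} \<in> A \<and> u \<noteq> v"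

definition reach :: "'a set set \<Rightarrow> 'a \<Rightarrow> 'a \<Rightarrow> bool" where
  "reach A = (adj A)\<^sup>*\<^sup>*"

definition is_cycle :: "'a set set \<Rightarrow> 'a list \<Rightarrow> bool" where
  "is_cycle A cs \<longleftrightarrow> length cs \<ge> 3 \<and> distinct cs
     \<and> (\<forall>i. Suc i < length cs \<longrightarrow> {cs ! i, cs ! Suc i} \<in> A)
     \<and> {last cs, hd cs} \<in> A"

definition forest :: "'a set set \<Rightarrow> bool" where
  "forest A \<longleftrightarrow> (\<nexists>cs. is_cycle A cs)"

definition spanning_forest :: "'a set \<Rightarrow> 'a set set \<Rightarrow> 'a set set \<Rightarrow> bool" where
  "spanning_forest V S F \<longleftrightarrow> F \<subseteq> S \<and> forest F
     \<and> (\<forall>u\<in>V. \<forall>v\<in>V. reach F u v \<longleftrightarrow> reach S u v)"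

definition min_spanning_forest :: "'a set \<Rightarrow> 'a set set \<Rightarrow> ('a set \<Rightarrow> real) \<Rightarrow> 'a set set \<Rightarrow> bool" where
  "min_spanning_forest V S w F \<longleftrightarrow> spanning_forest V S F
     \<and> (\<forall>F'. spanning_forest V S F' \<longrightarrow> wt w F \<le> wt w F')"

definition ham_path :: "'a set \<Rightarrow> 'a set set \<Rightarrow> 'a list \<Rightarrow> bool" where
  "ham_path V E p \<longleftrightarrow> distinct p \<and> set p = V
     \<and> (\<forall>i. Suc i < length p \<longrightarrow> {p ! i, p ! Suc i} \<in> E)"

definition path_edges :: "'a list \<Rightarrow> 'a set set" where
  "path_edges p = {{p ! i, p ! Suc i} | i. Suc i < length p}"

definition min_ham_path :: "'a set \<Rightarrow> 'a set set \<Rightarrow> ('a set \<Rightarrow> real) \<Rightarrow> 'a list \<Rightarrow> bool" where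
  "min_ham_path V E w p \<longleftrightarrow> ham_path V E p
     \<and> (\<forall>q. ham_path V E q \<longrightarrow> wt w (path_edges p) \<le> wt w (path_edges q))"

definition isolated :: "'a set \<Rightarrow> 'a set set \<Rightarrow> 'a set" where
  "isolated V A = {v \<in> V. \<forall>e\<in>A. v \<notin> e}"

end

theory Submission
  imports Defs
begin

text \<open>
  The edges of \<open>H\<close> split into those kept in \<open>S\<close> and those dropped;
  a dropped edge \<open>h\<close> has an endpoint \<open>low h\<close> whose range is below \<open>w(h)\<close>, so every forest
  edge at \<open>low h\<close> is lighter than \<open>h\<close>.

  Greedily, choose forest edges \<open>Q\<close> independent over the kept edges (each joins two
  components), each charged injectively to a dropped edge at whose low end it lies, and
  maximal with this property; then extend by a maximal independent set \<open>P\<close> of forest edges.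
  Then \<open>kept \<union> Q \<union> P\<close> spans \<open>S\<close>, so by minimality \<open>w(F) \<le> w(kept) + w(Q) + w(P) \<le> w(H) + w(P)\<close>,
  and removing \<open>Et = F - P\<close> costs at most \<open>w(H)\<close>. Counting components gives
  \<open>|P| + |Q| \<le> #dropped\<close>; by maximality of \<open>Q\<close> the low ends of the uncharged dropped edges
  are isolated in \<open>P\<close>, each vertex being the low end of at most two path edges, which
  yields \<open>|V| \<le> |isolated| + 2|P| \<le> 5 |isolated|\<close>.
\<close>

lemma adj_sym: "adj A u v \<Longrightarrow> adj A v u"
  by (auto simp: adj_def insert_commute)

lemma reach_refl [simp]: "reach A u u"
  by (simp add: reach_def)

lemma reach_trans: "reach A u v \<Longrightarrow> reach A v x \<Longrightarrow> reach A u x"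
  unfolding reach_def by (rule rtranclp_trans)

lemma reach_sym: "reach A u v \<Longrightarrow> reach A v u"
  unfolding reach_def
proof (induction rule: rtranclp_induct)
  case (step y z)
  then show ?case by (meson adj_sym converse_rtranclp_into_rtranclp)
qed simp

lemma reach_edge: "{u, v} \<in> A \<Longrightarrow> reach A u v"
  unfolding reach_def by (cases "u = v") (auto simp: adj_def)

lemma reach_via_edges:
  assumes edges: "\<And>a b. {a, b} \<in> A \<Longrightarrow> reach B a b" and "reach A u v"
  shows "reach B u v"
  using assms(2) unfolding reach_def[of A]
proof (induction rule: rtranclp_induct)
  case (step y z)
  then have "reach B y z" using edges by (simp add: adj_def)
  with step.IH show ?case by (rule reach_trans)
qed simp

lemma reach_mono: "A \<subseteq> B \<Longrightarrow> reach A u v \<Longrightarrow> reach B u v"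
  by (rule reach_via_edges[of A]) (auto intro: reach_edge)

lemma reach_insert:
  "reach (insert {x, y} A) u v \<longleftrightarrow>
     reach A u v \<or> (reach A u x \<and> reach A y v) \<or> (reach A u y \<and> reach A x v)"
proof
  assume "reach (insert {x, y} A) u v"
  then show "reach A u v \<or> (reach A u x \<and> reach A y v) \<or> (reach A u y \<and> reach A x v)"
    unfolding reach_def[of "insert {x, y} A"]
  proof (induction rule: rtranclp_induct)
    case (step b c)
    from step(2) have "{b, c} = {x, y} \<or> reach A b c"
      by (auto simp: adj_def intro: reach_edge)
    then show ?case
      using step(3) by (auto simp: doubleton_eq_iff dest: reach_sym intro: reach_trans)
  qed simp
next
  have new: "reach (insert {x, y} A) x y" "reach (insert {x, y} A) y x"
    by (auto intro: reach_edge simp: insert_commute)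
  have old: "reach A a b \<Longrightarrow> reach (insert {x, y} A) a b" for a b
    by (rule reach_mono[of A]) auto
  assume "reach A u v \<or> (reach A u x \<and> reach A y v) \<or> (reach A u y \<and> reach A x v)"
  then show "reach (insert {x, y} A) u v" using new old reach_trans by metis
qed

lemma reach_insert_connected: "reach A x y \<Longrightarrow> reach (insert {x, y} A) = reach A"
  by (intro ext) (metis reach_insert reach_trans reach_sym)

definition components :: "'a set \<Rightarrow> 'a set set \<Rightarrow> 'a set set" where
  "components V A = (\<lambda>u. {v \<in> V. reach A u v}) ` V"

definition ncomp :: "'a set \<Rightarrow> 'a set set \<Rightarrow> nat" where
  "ncomp V A = card (components V A)"

definition pairs :: "'a set \<Rightarrow> 'a set set" where
  "pairs V = {{a, b} | a b. a \<in> V \<and> b \<in> V}"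

lemma pairs_memD: "{a, b} \<in> pairs V \<Longrightarrow> a \<in> V \<and> b \<in> V"
  by (auto simp: pairs_def doubleton_eq_iff)

lemma pairs_finite: "finite V \<Longrightarrow> finite (pairs V)"
  by (rule finite_subset[of _ "Pow V"]) (auto simp: pairs_def)

lemma card_pair_le: "e \<in> pairs V \<Longrightarrow> card e \<le> 2"
  by (auto simp: pairs_def card_insert_le_m1)

lemma ncomp_pos: "finite V \<Longrightarrow> V \<noteq> {} \<Longrightarrow> 1 \<le> ncomp V A"
  by (auto simp: ncomp_def components_def Suc_le_eq card_gt_0_iff)

lemma component_eq_iff:
  assumes "u \<in> V" "x \<in> V"
  shows "{v \<in> V. reach A u v} = {v \<in> V. reach A x v} \<longleftrightarrow> reach A u x"
  using assms by (auto dest: reach_sym intro: reach_trans)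

lemma ncomp_insert_merge:
  assumes fin: "finite V" and xV: "x \<in> V" and yV: "y \<in> V" and apart: "\<not> reach A x y"
  shows "ncomp V (insert {x, y} A) + 1 = ncomp V A"
proof -
  define C where "C u = {v \<in> V. reach A u v}" for u
  define near where "near u \<longleftrightarrow> reach A u x \<or> reach A u y" for u
  define W where "W = C ` {u \<in> V. \<not> near u}"
  have x_in: "x \<in> C x" and y_in: "y \<in> C y" using xV yV by (simp_all add: C_def)
  have far: "x \<notin> S" "y \<notin> S" if "S \<in> W" for S
    using that by (auto simp: W_def C_def near_def dest: reach_sym)
  have near_class: "C u \<in> {C x, C y}" if "u \<in> V" "near u" for u
    using that component_eq_iff[OF that(1) xV] component_eq_iff[OF that(1) yV]
    by (auto simp: C_def near_def)
  have "components V A = C ` {u \<in> V. near u} \<union> W"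
    unfolding components_def W_def C_def by blast
  also have "C ` {u \<in> V. near u} = {C x, C y}"
    using near_class xV yV by (auto simp: near_def)
  finally have old: "components V A = insert (C x) (insert (C y) W)" by simp
  have new_class: "{v \<in> V. reach (insert {x, y} A) u v} = (if near u then C x \<union> C y else C u)"
    if "u \<in> V" for u
    using apart unfolding C_def near_def reach_insert by (auto dest: reach_sym intro: reach_trans)
  have "components V (insert {x, y} A) = (\<lambda>u. if near u then C x \<union> C y else C u) ` V"
    unfolding components_def using new_class by (intro image_cong) auto
  also have "\<dots> = insert (C x \<union> C y) W"
    using xV by (auto simp: W_def near_def)
  finally have new: "components V (insert {x, y} A) = insert (C x \<union> C y) W" .
  have "C x \<noteq> C y" using component_eq_iff[OF xV yV] apart by (simp add: C_def)
  moreover have "finite W" using fin by (simp add: W_def)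
  ultimately show ?thesis
    unfolding ncomp_def old new using far x_in y_in by (auto simp: card_insert_if)
qed

lemma ncomp_union_le:
  assumes "finite V" "finite X" "X \<subseteq> pairs V"
  shows "ncomp V A \<le> ncomp V (A \<union> X) + card X"
  using assms(2,3)
proof (induction X rule: finite_induct)
  case (insert e X)
  then obtain x y where e: "e = {x, y}" "x \<in> V" "y \<in> V" by (auto simp: pairs_def)
  have "ncomp V (A \<union> X) \<le> ncomp V (insert e (A \<union> X)) + 1"
  proof (cases "reach (A \<union> X) x y")
    case True then show ?thesis by (simp add: e ncomp_def components_def reach_insert_connected)
  next
    case False then show ?thesis using ncomp_insert_merge[OF assms(1) e(2,3) False] e by simp
  qed
  then show ?case using insert by simp
qed simp

text \<open>\<open>P\<close> is independent over \<open>A\<close> if each of its edges joins two distinct components,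
  i.e. adding \<open>P\<close> to \<open>A\<close> lowers the number of components by exactly \<open>|P|\<close>.\<close>
definition independent_over :: "'a set \<Rightarrow> 'a set set \<Rightarrow> 'a set set \<Rightarrow> bool" where
  "independent_over V A P \<longleftrightarrow> ncomp V (A \<union> P) + card P = ncomp V A"

lemma independent_over_empty: "independent_over V A {}"
  by (simp add: independent_over_def)

lemma independent_over_insert:
  assumes "finite V" "finite P" "independent_over V A P"
    and "a \<in> V" "b \<in> V" "\<not> reach (A \<union> P) a b"
  shows "{a, b} \<notin> P" and "independent_over V A (insert {a, b} P)"
proof -
  show new: "{a, b} \<notin> P"
    using assms(6) reach_edge[of a b "A \<union> P"] by blast
  have "A \<union> insert {a, b} P = insert {a, b} (A \<union> P)" by blast
  then show "independent_over V A (insert {a, b} P)"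
    using assms ncomp_insert_merge[OF assms(1,4,5,6)] new
    by (simp add: independent_over_def)
qed

lemma independent_edge_apart:
  assumes fin: "finite V" "finite P" and PV: "P \<subseteq> pairs V"
    and indep: "independent_over V A P" and ab: "{a, b} \<in> P"
  shows "\<not> reach A a b"
proof
  assume "reach A a b"
  define R where "R = P - {{a, b}}"
  have "reach (A \<union> R) a b" using \<open>reach A a b\<close> by (rule reach_mono[rotated]) blast
  moreover have "A \<union> P = insert {a, b} (A \<union> R)" using ab by (auto simp: R_def)
  ultimately have same: "ncomp V (A \<union> P) = ncomp V (A \<union> R)"
    by (simp add: ncomp_def components_def reach_insert_connected)
  have "ncomp V A \<le> ncomp V (A \<union> R) + card R"
    using fin PV by (intro ncomp_union_le) (auto simp: R_def)
  moreover have "Suc (card R) = card P"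
    using card_Suc_Diff1[OF fin(2) ab] by (simp add: R_def)
  ultimately show False using indep same by (simp add: independent_over_def)
qed

text \<open>Greedy extension with charging: choose a maximal independent set \<open>Q \<subseteq> C\<close> over \<open>A\<close>
  together with an injective charge \<open>g\<close> of its edges to tokens in \<open>N\<close>, where edge \<open>q\<close>
  may be charged to token \<open>h\<close> only if \<open>R h q\<close>.\<close>
lemma greedy_charged_extension:
  fixes R :: "'t \<Rightarrow> 'a set \<Rightarrow> bool"
  assumes finV: "finite V" and finC: "finite C" and CV: "C \<subseteq> pairs V"
  obtains Q g where "Q \<subseteq> C" "independent_over V A Q" "inj_on g Q" "g ` Q \<subseteq> N"
    "\<forall>q\<in>Q. R (g q) q"
    "\<And>h a b. h \<in> N \<Longrightarrow> h \<notin> g ` Q \<Longrightarrow> {a, b} \<in> C \<Longrightarrow> R h {a, b} \<Longrightarrow> reach (A \<union> Q) a b"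
proof -
  define valid where "valid = (\<lambda>(Q, g :: 'a set \<Rightarrow> 't). Q \<subseteq> C \<and> independent_over V A Q
    \<and> inj_on g Q \<and> g ` Q \<subseteq> N \<and> (\<forall>q\<in>Q. R (g q) q))"
  have start: "valid ({}, undefined)"
    by (simp add: valid_def independent_over_empty)
  have bounded: "\<forall>y. valid y \<longrightarrow> card (fst y) < card C + 1"
    using card_mono[OF finC] by (auto simp: valid_def less_Suc_eq_le)
  obtain y where max: "valid y" and largest: "\<And>y'. valid y' \<Longrightarrow> card (fst y') \<le> card (fst y)"
    using ex_has_greatest_nat[OF start bounded] by blast
  obtain Q g where y: "y = (Q, g)" by (cases y)
  from max have QC: "Q \<subseteq> C" and indep: "independent_over V A Q" and inj: "inj_on g Q"
    and gN: "g ` Q \<subseteq> N" and charge: "\<forall>q\<in>Q. R (g q) q"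
    by (auto simp: valid_def y)
  have finQ: "finite Q" using finC QC by (rule rev_finite_subset)
  show thesis
  proof (rule that[OF QC indep inj gN charge])
    fix h a b assume h: "h \<in> N" "h \<notin> g ` Q" and ab: "{a, b} \<in> C" "R h {a, b}"
    show "reach (A \<union> Q) a b"
    proof (rule ccontr)
      assume apart: "\<not> reach (A \<union> Q) a b"
      have abV: "a \<in> V" "b \<in> V" using pairs_memD[of a b V] ab(1) CV by blast+
      note ext = independent_over_insert[OF finV finQ indep abV apart]
      define e where "e = {a, b}"
      define g' where "g' = g(e := h)"
      have same: "g' q = g q" if "q \<in> Q" for q
        using that ext(1) by (auto simp: g'_def e_def)
      then have image: "g' ` Q = g ` Q" by (rule image_cong[OF refl])
      have "inj_on g' Q" using inj inj_on_cong[of Q g' g] same by blast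
      then have "inj_on g' (insert e Q)"
        using image h(2) ext(1) by (simp add: g'_def e_def)
      moreover have "g' ` insert e Q \<subseteq> N"
        unfolding image_insert image using gN h(1) by (simp add: g'_def)
      moreover have "\<forall>q\<in>insert e Q. R (g' q) q" using same charge ab(2) by (simp add: g'_def e_def)
      ultimately have "valid (insert e Q, g')"
        using ext(2) QC ab(1) unfolding valid_def e_def by simp
      then have "card (insert e Q) \<le> card Q" using largest[of "(insert e Q, g')"] by (simp add: y)
      then show False using ext(1) finQ by (simp add: e_def)
    qed
  qed
qed


lemma spanning_extension:
  assumes "finite V" "finite C" "C \<subseteq> pairs V"
  obtains P where "P \<subseteq> C" "independent_over V A P"
    "\<And>a b. {a, b} \<in> C \<Longrightarrow> reach (A \<union> P) a b"
proof (rule greedy_charged_extension[OF assms, where A=A and N=C and R="(=)"])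
  fix P g assume P: "P \<subseteq> C" "independent_over V A P" and identity: "\<forall>q\<in>P. g q = q"
    and span: "\<And>h a b. h \<in> C \<Longrightarrow> h \<notin> g ` P \<Longrightarrow> {a, b} \<in> C \<Longrightarrow> h = {a, b}
      \<Longrightarrow> reach (A \<union> P) a b"
  have "g ` P = P" using identity by simp
  then have "reach (A \<union> P) a b" if "{a, b} \<in> C" for a b
    using span[OF that _ that] reach_edge[of a b "A \<union> P"] by blast
  with P show thesis by (rule that)
qed

lemma reach_remove_cycle_edge:
  assumes cyc: "is_cycle B cs"
  shows "reach (B - {{last cs, hd cs}}) = reach B"
proof -
  define e where "e = {last cs, hd cs}"
  define l where "l = length cs"
  from cyc have l3: "3 \<le> l" and dist: "distinct cs"
    and edges: "\<And>i. Suc i < l \<Longrightarrow> {cs ! i, cs ! Suc i} \<in> B"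
    unfolding is_cycle_def l_def by auto
  have "cs \<noteq> []" using l3 by (auto simp: l_def)
  then have hd: "hd cs = cs ! 0" and last: "last cs = cs ! (l - 1)"
    by (simp_all add: l_def hd_conv_nth last_conv_nth)
  have index_eq: "cs ! i = cs ! j \<longleftrightarrow> i = j" if "i < l" "j < l" for i j
    using nth_eq_iff_index_eq[OF dist] that by (simp add: l_def)
  have other_edges: "{cs ! i, cs ! Suc i} \<in> B - {e}" if "Suc i < l" for i
  proof -
    have "cs ! Suc i \<noteq> cs ! 0" using index_eq[of "Suc i" 0] that by simp
    moreover have "cs ! i = cs ! 0 \<Longrightarrow> cs ! Suc i \<noteq> cs ! (l - 1)"
      using index_eq[of i 0] index_eq[of "Suc i" "l - 1"] that l3 by simp
    ultimately have "{cs ! i, cs ! Suc i} \<noteq> {cs ! (l - 1), cs ! 0}"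
      by (auto simp: doubleton_eq_iff)
    then show ?thesis using edges[OF that] by (simp add: e_def hd last)
  qed
  have along: "reach (B - {e}) (cs ! 0) (cs ! k)" if "k < l" for k
    using that
  proof (induction k)
    case (Suc k)
    have "reach (B - {e}) (cs ! k) (cs ! Suc k)"
      using other_edges[OF Suc.prems] by (rule reach_edge)
    with Suc show ?case by (auto intro: reach_trans)
  qed simp
  have closing: "reach (B - {e}) (last cs) (hd cs)"
    using along[of "l - 1"] l3 reach_sym by (simp add: hd last)
  have "reach (B - {e}) u v" if "reach B u v" for u v
  proof (rule reach_via_edges[OF _ that])
    fix a b assume "{a, b} \<in> B"
    then show "reach (B - {e}) a b"
      using closing reach_sym[OF closing]
      by (cases "{a, b} = e") (auto simp: e_def doubleton_eq_iff intro: reach_edge)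
  qed
  then show ?thesis unfolding e_def[symmetric] by (intro ext iffI) (auto intro: reach_mono)
qed

text \<open>Every finite edge set contains a forest with the same reachability relation:
  a smallest such subset has no cycle.\<close>
lemma forest_with_same_reach:
  assumes "finite U"
  obtains B where "B \<subseteq> U" "forest B" "reach B = reach U"
proof -
  define same where "same B \<longleftrightarrow> B \<subseteq> U \<and> reach B = reach U" for B
  obtain B where B: "same B" and smallest: "\<And>B'. same B' \<Longrightarrow> card B \<le> card B'"
    using ex_has_least_nat[of same U card] by (auto simp: same_def)
  have "forest B"
    unfolding forest_def
  proof
    assume "\<exists>cs. is_cycle B cs"
    then obtain cs where cyc: "is_cycle B cs" by blast
    define e where "e = {last cs, hd cs}"
    have "e \<in> B" using cyc by (simp add: is_cycle_def e_def)
    moreover have "finite B" using B assms by (auto simp: same_def intro: finite_subset)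
    ultimately have "card (B - {e}) < card B" by (rule card_Diff1_less[rotated])
    moreover have "same (B - {e})"
      using B reach_remove_cycle_edge[OF cyc] by (auto simp: same_def e_def)
    ultimately show False using smallest by fastforce
  qed
  then show thesis using that[of B] B unfolding same_def by blast
qed

lemma min_spanning_forest_weight_le:
  assumes msf: "min_spanning_forest V S w F" and fin: "finite U" and US: "U \<subseteq> S"
    and nonneg: "\<And>e. e \<in> U \<Longrightarrow> 0 \<le> w e" and spans: "\<And>a b. {a, b} \<in> F \<Longrightarrow> reach U a b"
  shows "wt w F \<le> wt w U"
proof -
  obtain B where BU: "B \<subseteq> U" and "forest B" and reachB: "reach B = reach U"
    using forest_with_same_reach[OF fin] .
  have "spanning_forest V S B"
    unfolding spanning_forest_def
  proof (intro conjI ballI)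
    show "B \<subseteq> S" using BU US by blast
    show "forest B" by fact
    fix u v assume "u \<in> V" "v \<in> V"
    then have "reach S u v \<longleftrightarrow> reach F u v"
      using msf by (simp add: min_spanning_forest_def spanning_forest_def)
    moreover have "reach F u v \<Longrightarrow> reach U u v" using spans by (rule reach_via_edges)
    moreover have "reach U u v \<Longrightarrow> reach S u v" using US by (rule reach_mono)
    ultimately show "reach B u v \<longleftrightarrow> reach S u v" unfolding reachB by blast
  qed
  then have "wt w F \<le> wt w B" using msf by (simp add: min_spanning_forest_def)
  also have "\<dots> \<le> wt w U"
    unfolding wt_def using BU nonneg by (intro sum_mono2[OF fin]) auto
  finally show ?thesis .
qed

lemma path_edges_finite [simp]: "finite (path_edges p)"
proof -
  have "path_edges p = (\<lambda>i. {p ! i, p ! Suc i}) ` {i. Suc i < length p}"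
    by (auto simp: path_edges_def)
  moreover have "finite {i. Suc i < length p}"
    by (rule finite_subset[of _ "{..<length p}"]) auto
  ultimately show ?thesis by simp
qed

lemma ham_path_connected:
  assumes "ham_path V E p" "u \<in> V" "v \<in> V"
  shows "reach (path_edges p) u v"
proof -
  have from_start: "reach (path_edges p) (p ! 0) (p ! k)" if "k < length p" for k
    using that
  proof (induction k)
    case (Suc k)
    then have "{p ! k, p ! Suc k} \<in> path_edges p" by (auto simp: path_edges_def)
    with Suc show ?case by (auto intro: reach_trans reach_edge)
  qed simp
  obtain i j where "i < length p" "u = p ! i" "j < length p" "v = p ! j"
    using assms by (auto simp: ham_path_def in_set_conv_nth)
  then show ?thesis using from_start by (metis reach_sym reach_trans)
qed

lemma path_edges_at_vertex:
  assumes dist: "distinct p"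
  shows "card {e \<in> path_edges p. v \<in> e} \<le> 2"
proof (cases "v \<in> set p")
  case False
  then have empty: "{e \<in> path_edges p. v \<in> e} = {}"
    by (auto simp: path_edges_def)
  show ?thesis unfolding empty by simp
next
  case True
  then obtain k where k: "k < length p" "v = p ! k" by (auto simp: in_set_conv_nth)
  have "{e \<in> path_edges p. v \<in> e} \<subseteq> {{p ! k, p ! Suc k}, {p ! (k - 1), p ! k}}"
  proof
    fix e assume "e \<in> {e \<in> path_edges p. v \<in> e}"
    then obtain i where i: "Suc i < length p" "e = {p ! i, p ! Suc i}" and "v \<in> e"
      by (auto simp: path_edges_def)
    then have "i = k \<or> Suc i = k"
      using k nth_eq_iff_index_eq[OF dist] by auto
    then show "e \<in> {{p ! k, p ! Suc k}, {p ! (k - 1), p ! k}}" using i by auto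
  qed
  then have "card {e \<in> path_edges p. v \<in> e} \<le> card {{p ! k, p ! Suc k}, {p ! (k - 1), p ! k}}"
    by (rule card_mono[rotated]) simp
  also have "\<dots> \<le> 2" by (simp add: card_insert_le_m1)
  finally show ?thesis .
qed

lemma isolated_lower_bound:
  fixes z :: "'e \<Rightarrow> 'a"
  assumes finV: "finite V" and PV: "P \<subseteq> pairs V" and finU: "finite U"
    and few: "card P \<le> card U" and iso: "z ` U \<subseteq> isolated V P"
    and fibres: "\<And>v. card {h \<in> U. z h = v} \<le> 2"
  shows "card V \<le> 5 * card (isolated V P)"
proof -
  have finP: "finite P" using pairs_finite[OF finV] PV by (rule finite_subset[rotated])
  have isolated_eq: "isolated V P = V - \<Union>P" by (auto simp: isolated_def)
  have "card V \<le> card (isolated V P \<union> \<Union>P)"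
    using finV finP PV by (intro card_mono) (auto simp: isolated_eq pairs_def)
  also have "\<dots> \<le> card (isolated V P) + card (\<Union>P)" by (rule card_Un_le)
  finally have V_le: "card V \<le> card (isolated V P) + card (\<Union>P)" .
  have "card (\<Union>P) \<le> (\<Sum>e\<in>P. card e)" by (rule card_Union_le_sum_card)
  also have "\<dots> \<le> (\<Sum>e\<in>P. 2)"
    using PV card_pair_le by (intro sum_mono) blast
  finally have covered: "card (\<Union>P) \<le> 2 * card P" by simp
  have "card U = card (\<Union>v\<in>z ` U. {h \<in> U. z h = v})"
    by (rule arg_cong[of _ _ card]) blast
  also have "\<dots> \<le> (\<Sum>v\<in>z ` U. card {h \<in> U. z h = v})"
    using finU by (intro card_UN_le) simp
  also have "\<dots> \<le> (\<Sum>v\<in>z ` U. 2)"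
    using fibres by (intro sum_mono)
  also have "\<dots> = 2 * card (z ` U)" by simp
  also have "card (z ` U) \<le> card (isolated V P)"
    using iso finV by (intro card_mono) (auto simp: isolated_def)
  finally have "card U \<le> 2 * card (isolated V P)" by simp
  then show ?thesis using V_le covered few by linarith
qed

lemma wt_union_le:
  assumes "finite A" "finite B" "\<And>e. e \<in> A \<inter> B \<Longrightarrow> 0 \<le> w e"
  shows "wt w (A \<union> B) \<le> wt w A + wt w B"
proof -
  have "0 \<le> wt w (A \<inter> B)" unfolding wt_def using assms(3) by (rule sum_nonneg)
  then show ?thesis using sum_Un[OF assms(1,2), of w] by (simp add: wt_def)
qed

locale disk_graph_setting =
  fixes V :: "'a set" and E :: "'a set set" and w :: "'a set \<Rightarrow> real" and r :: "'a \<Rightarrow> real"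
    and F :: "'a set set" and H :: "'a list"
  assumes graph: "wgraph V E"
    and nonneg: "\<And>e. e \<in> E \<Longrightarrow> 0 \<le> w e"
    and msf: "min_spanning_forest V (SDG E w r) w F"
    and ham: "ham_path V E H"
begin

definition kept :: "'a set set" where
  "kept = path_edges H \<inter> SDG E w r"

definition dropped :: "'a set set" where
  "dropped = path_edges H - SDG E w r"

text \<open>A dropped edge has an endpoint whose range is shorter than the edge: its low end.\<close>
definition low :: "'a set \<Rightarrow> 'a" where
  "low h = (SOME v. v \<in> h \<and> r v < w h)"

lemma finite_V: "finite V"
  using graph by (simp add: wgraph_def)

lemma E_pairs: "E \<subseteq> pairs V"
  using graph unfolding wgraph_def pairs_def by blast

lemma F_SDG: "F \<subseteq> SDG E w r"
  using msf by (simp add: min_spanning_forest_def spanning_forest_def)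

lemma F_pairs: "F \<subseteq> pairs V"
  using F_SDG E_pairs by (auto simp: SDG_def)

lemma finite_F: "finite F"
  using F_pairs pairs_finite[OF finite_V] by (rule finite_subset)

lemma path_edges_E: "path_edges H \<subseteq> E"
  using ham by (auto simp: ham_path_def path_edges_def)

lemma finite_dropped: "finite dropped"
  by (simp add: dropped_def)

lemma kept_union_dropped: "kept \<union> dropped = path_edges H"
  by (auto simp: kept_def dropped_def)

lemma low_endpoint:
  assumes "h \<in> dropped"
  shows "low h \<in> h" "r (low h) < w h"
proof -
  from assms obtain u v where "h = {u, v}" "\<not> (w h \<le> r u \<and> w h \<le> r v)"
    using path_edges_E by (auto simp: dropped_def SDG_def)
  then have "\<exists>v. v \<in> h \<and> r v < w h" by auto
  then show "low h \<in> h" "r (low h) < w h"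
    unfolding low_def by (metis (mono_tags, lifting) someI_ex)+
qed

lemma low_in_V: "h \<in> dropped \<Longrightarrow> low h \<in> V"
  using low_endpoint(1) path_edges_E E_pairs by (fastforce simp: dropped_def pairs_def)

text \<open>Every forest edge at the low end of a dropped edge is lighter than the dropped edge,
  since both endpoints of an edge of the disk graph have range at least its weight.\<close>
lemma forest_edge_at_low_lighter:
  assumes "h \<in> dropped" "f \<in> F" "low h \<in> f"
  shows "w f < w h"
proof -
  have "f \<in> SDG E w r" using assms(2) F_SDG by blast
  moreover obtain a b where "f = {a, b}" using assms(2) F_pairs by (auto simp: pairs_def)
  ultimately have "w f \<le> r (low h)" using assms(3) by (auto simp: SDG_def)
  then show ?thesis using low_endpoint(2)[OF assms(1)] by simp
qed

text \<open>The path is connected, so dropping \<open>k\<close> of its edges leaves at most \<open>k + 1\<close> components.\<close>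
lemma ncomp_kept: "ncomp V kept \<le> card dropped + 1"
proof -
  have "ncomp V kept \<le> ncomp V (kept \<union> dropped) + card dropped"
    using finite_V finite_dropped path_edges_E E_pairs
    by (intro ncomp_union_le) (auto simp: dropped_def)
  moreover have "components V (path_edges H) \<subseteq> {V}"
    using ham_path_connected[OF ham] by (auto simp: components_def ham_path_def)
  then have "ncomp V (path_edges H) \<le> card {V}"
    unfolding ncomp_def by (rule card_mono[rotated]) simp
  ultimately show ?thesis by (simp add: kept_union_dropped)
qed

text \<open>A vertex lies on at most two path edges, so it is the low end of at most two of them.\<close>
lemma low_fibres: "U \<subseteq> dropped \<Longrightarrow> card {h \<in> U. low h = v} \<le> 2"
proof -
  assume U: "U \<subseteq> dropped"
  have "{h \<in> U. low h = v} \<subseteq> {e \<in> path_edges H. v \<in> e}"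
    using U low_endpoint(1) by (auto simp: dropped_def)
  then have "card {h \<in> U. low h = v} \<le> card {e \<in> path_edges H. v \<in> e}"
    by (intro card_mono) auto
  also have "\<dots> \<le> 2" using ham by (intro path_edges_at_vertex) (simp add: ham_path_def)
  finally show ?thesis .
qed

lemma weight_bound:
  assumes QF: "Q \<subseteq> F" and PF: "P \<subseteq> F" and inj: "inj_on g Q" and gQ: "g ` Q \<subseteq> dropped"
    and charge: "\<forall>q\<in>Q. low (g q) \<in> q"
    and span: "\<And>a b. {a, b} \<in> F \<Longrightarrow> reach (kept \<union> Q \<union> P) a b"
  shows "wt w F \<le> wt w (path_edges H) + wt w P"
proof -
  have finQ: "finite Q" and finP: "finite P" using QF PF finite_F finite_subset by blast+
  have FE: "F \<subseteq> E" using F_SDG by (auto simp: SDG_def)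
  have kept_E: "kept \<subseteq> E" using path_edges_E by (auto simp: kept_def)
  have "wt w F \<le> wt w (kept \<union> Q \<union> P)"
  proof (rule min_spanning_forest_weight_le[OF msf _ _ _ span])
    show "finite (kept \<union> Q \<union> P)" using finQ finP by (simp add: kept_def)
    show "kept \<union> Q \<union> P \<subseteq> SDG E w r" using QF PF F_SDG by (auto simp: kept_def)
    show "0 \<le> w e" if "e \<in> kept \<union> Q \<union> P" for e
      using that kept_E QF PF FE nonneg by blast
  qed
  also have "\<dots> \<le> wt w kept + wt w Q + wt w P"
    using wt_union_le[of kept Q w] wt_union_le[of "kept \<union> Q" P w] finQ finP kept_E QF FE nonneg
    by (fastforce simp: kept_def)
  also have "wt w Q \<le> wt w (g ` Q)"
  proof -
    have "w q \<le> w (g q)" if "q \<in> Q" for q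
      using forest_edge_at_low_lighter[of "g q" q] that gQ QF charge by fastforce
    then show ?thesis unfolding wt_def sum.reindex[OF inj] by (intro sum_mono) simp
  qed
  also have "wt w (g ` Q) \<le> wt w dropped"
    unfolding wt_def using gQ finite_dropped nonneg path_edges_E
    by (intro sum_mono2) (auto simp: dropped_def)
  also have "wt w kept + wt w dropped = wt w (path_edges H)"
    unfolding wt_def kept_union_dropped[symmetric]
    by (rule sum.union_disjoint[symmetric]) (auto simp: kept_def dropped_def)
  finally show ?thesis by simp
qed

text \<open>Counting: if \<open>Q\<close> and then \<open>P\<close> are independent extensions of \<open>kept\<close>, and every forest edge at
  the low end of a still uncharged dropped edge is spanned by \<open>kept \<union> Q\<close>, then the low ends
  of the uncharged dropped edges are isolated in \<open>P\<close>, and they are numerous.\<close>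
lemma count_bound:
  assumes QF: "Q \<subseteq> F" and PF: "P \<subseteq> F" and inj: "inj_on g Q" and gQ: "g ` Q \<subseteq> dropped"
    and indQ: "independent_over V kept Q" and indP: "independent_over V (kept \<union> Q) P"
    and spanQ: "\<And>h a b. h \<in> dropped \<Longrightarrow> h \<notin> g ` Q \<Longrightarrow> {a, b} \<in> F \<Longrightarrow> low h \<in> {a, b}
      \<Longrightarrow> reach (kept \<union> Q) a b"
  shows "card V \<le> 5 * card (isolated V P)"
proof (cases "V = {}")
  case False
  define U where "U = dropped - g ` Q"
  have finP: "finite P" and PV: "P \<subseteq> pairs V" using PF finite_F F_pairs finite_subset by blast+
  have "card P + card Q \<le> card dropped"
    using indQ indP ncomp_kept ncomp_pos[OF finite_V False, of "kept \<union> Q \<union> P"]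
    by (simp add: independent_over_def)
  moreover have "card U = card dropped - card Q"
    unfolding U_def using card_Diff_subset[OF finite_subset[OF gQ finite_dropped] gQ] card_image[OF inj]
    by simp
  ultimately have few: "card P \<le> card U" by simp
  have "low h \<in> isolated V P" if "h \<in> U" for h
  proof -
    have "low h \<notin> f" if "f \<in> P" for f
    proof
      assume at_low: "low h \<in> f"
      obtain a b where ab: "f = {a, b}" using \<open>f \<in> P\<close> PV by (auto simp: pairs_def)
      have "reach (kept \<union> Q) a b"
        using spanQ[of h a b] \<open>h \<in> U\<close> \<open>f \<in> P\<close> PF at_low ab by (auto simp: U_def)
      moreover have "\<not> reach (kept \<union> Q) a b"
        using independent_edge_apart[OF finite_V finP PV indP] \<open>f \<in> P\<close> ab by blast
      ultimately show False by contradiction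
    qed
    then show ?thesis using low_in_V \<open>h \<in> U\<close> by (auto simp: isolated_def U_def)
  qed
  then have iso: "low ` U \<subseteq> isolated V P" by blast
  have fibres: "card {h \<in> U. low h = v} \<le> 2" for v
    by (rule low_fibres) (auto simp: U_def)
  have "finite U" using finite_dropped by (simp add: U_def)
  then show ?thesis by (rule isolated_lower_bound[OF finite_V PV _ few iso fibres])
qed simp

theorem cheap_removal_isolates_fifth:
  "\<exists>Et \<subseteq> F. wt w Et \<le> wt w (path_edges H) \<and> card V \<le> 5 * card (isolated V (F - Et))"
proof -
  obtain Q g where QF: "Q \<subseteq> F" and indQ: "independent_over V kept Q" and inj: "inj_on g Q"
    and gQ: "g ` Q \<subseteq> dropped" and charge: "\<forall>q\<in>Q. low (g q) \<in> q"
    and spanQ: "\<And>h a b. h \<in> dropped \<Longrightarrow> h \<notin> g ` Q \<Longrightarrow> {a, b} \<in> F \<Longrightarrow> low h \<in> {a, b}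
      \<Longrightarrow> reach (kept \<union> Q) a b"
    by (rule greedy_charged_extension[OF finite_V finite_F F_pairs,
          where A=kept and N=dropped and R="\<lambda>h f. low h \<in> f"])
      (rule that)
  obtain P where PF: "P \<subseteq> F" and indP: "independent_over V (kept \<union> Q) P"
    and span: "\<And>a b. {a, b} \<in> F \<Longrightarrow> reach (kept \<union> Q \<union> P) a b"
    by (rule spanning_extension[OF finite_V finite_F F_pairs]) (rule that)
  have "wt w (F - P) = wt w F - wt w P"
    unfolding wt_def using finite_F PF by (rule sum_diff)
  also have "\<dots> \<le> wt w (path_edges H)" using weight_bound[OF QF PF inj gQ charge span] by simp
  finally have "wt w (F - P) \<le> wt w (path_edges H)" .
  moreover have "F - (F - P) = P" using PF by blast
  ultimately show ?thesis
    using count_bound[OF QF PF inj gQ indQ indP spanQ] by (intro exI[of _ "F - P"]) auto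
qed

end

theorem mainTheorem2:
  fixes V :: "'a set" and E :: "'a set set" and w :: "'a set \<Rightarrow> real"
    and r :: "'a \<Rightarrow> real" and F :: "'a set set" and H :: "'a list"
  assumes "wgraph V E"
    and "inj_on w E"
    and "\<forall>e\<in>E. w e > 0"
    and "\<exists>p. ham_path V E p"
    and "\<forall>v\<in>V. r v > 0"
    and "min_spanning_forest V (SDG E w r) w F"
    and "min_ham_path V E w H"
  shows "\<exists>Et \<subseteq> F. wt w Et \<le> wt w (path_edges H)
           \<and> real (card (isolated V (F - Et))) \<ge> real (card V) / 5"
proof -
  interpret disk_graph_setting V E w r F H
    using assms(1,3,6,7) by unfold_locales (auto simp: min_ham_path_def less_imp_le)
  obtain Et where "Et \<subseteq> F" "wt w Et \<le> wt w (path_edges H)"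
    and "card V \<le> 5 * card (isolated V (F - Et))"
    using cheap_removal_isolates_fifth by blast
  then show ?thesis by (intro exI[of _ Et]) simp
qed
end
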